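(* Let $T\in\mathcal B(\mathcal H)$ be left-invertible, with Cauchy dual $T'=T(T^*T)^{-1}$. The following are equivalent: (i) $T$ is a $2$-isometry and $T^*T(\ker T^* )\subseteq\ker T^*$; (ii) $T$ is a $2$-isometry and $T^*T(T(\mathcal H))\subseteq T(\mathcal H)$; (iii) $T'-2T+T^*T^2=0$; (iv) $(T^*T^2T^*-2TT^*+I)T=0$; (v) $T'(T^*T-I)=(T^*T-I)T$.
   Context: A $2$-isometry is $T$ with $I-2T^*T+T^{*2}T^2=0$. *)

theory Defs
  imports "HOL-Analysis.Analysis"
begin

text \<open>Bounded operators on a (real) Hilbert space H are modelled as bounded linear
functions H \<Rightarrow> H; operator product is composition, I is id.
is_adjoint T S: S is the Hilbert-space adjoint T* of T.\<close>

definition is_adjoint :: "('a::real_inner \<Rightarrow> 'a) \<Rightarrow> ('a \<Rightarrow> 'a) \<Rightarrow> bool" where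
  "is_adjoint T S \<longleftrightarrow> bounded_linear S \<and> (\<forall>x y. inner (T x) y = inner x (S y))"

definition left_invertible :: "('a::real_normed_vector \<Rightarrow> 'a) \<Rightarrow> bool" where
  "left_invertible T \<longleftrightarrow> (\<exists>L. bounded_linear L \<and> L \<circ> T = id)"

definition two_isometry :: "('a::real_vector \<Rightarrow> 'a) \<Rightarrow> ('a \<Rightarrow> 'a) \<Rightarrow> bool" where
  "two_isometry T Ts \<longleftrightarrow> (\<forall>x. x - 2 *\<^sub>R Ts (T x) + Ts (Ts (T (T x))) = 0)"

text \<open>Cauchy dual T' = T (T*T)^{-1} (T*T is invertible when T is left-invertible).\<close>
definition cauchy_dual :: "('a \<Rightarrow> 'a) \<Rightarrow> ('a \<Rightarrow> 'a) \<Rightarrow> 'a \<Rightarrow> 'a" where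
  "cauchy_dual T Ts = T \<circ> inv (Ts \<circ> T)"

definition ker :: "('a \<Rightarrow> 'b::zero) \<Rightarrow> 'a set" where
  "ker S = {x. S x = 0}"

end

theory Submission
  imports Defs
begin

text \<open>Left-invertibility makes \<open>T*T\<close> coercive, and on a Hilbert space a coercive operator is
  invertible: for a suitable step \<open>t > 0\<close> the map \<open>z \<mapsto> z - t(T*T z - y)\<close> is a contraction,
  whose fixed point solves \<open>T*T z = y\<close>. So the Cauchy dual is a genuine operator, and the
  whole argument is about the dual defect \<open>D = T' - 2T + T*T\<^sup>2\<close>. Since
  \<open>T*D = I - 2T*T + T*\<^sup>2T\<^sup>2\<close>, \<open>T\<close> is a 2-isometry exactly when \<open>D\<close> maps into
  \<open>ker T* = (ran T)\<^sup>\<bottom>\<close>. If \<open>T*T\<close> leaves \<open>ran T\<close> invariant, \<open>D\<close> also maps into \<open>ran T\<close>;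
  if it leaves \<open>ker T*\<close> invariant, \<open>D\<close> maps into \<open>(ker T*)\<^sup>\<bottom>\<close>. Either way \<open>D = 0\<close>, and
  conversely \<open>D = 0\<close> gives both invariances. Condition (iv) says \<open>D T*T = 0\<close>, and (v) is a
  rearrangement of \<open>D = 0\<close>.\<close>

lemma coercive_step_contraction:
  fixes A :: "'a::real_inner \<Rightarrow> 'a"
  assumes coercive: "\<And>u. c * (norm u)\<^sup>2 \<le> inner u (A u)"
    and bounded: "\<And>u. norm (A u) \<le> norm u * M"
    and "0 < c" "c \<le> M"
  shows "norm (u - (c / M\<^sup>2) *\<^sub>R A u) \<le> sqrt (1 - (c / M)\<^sup>2) * norm u"
proof -
  \<comment> \<open>\<open>t = c / M\<^sup>2\<close> minimises the bound \<open>1 - 2tc + t\<^sup>2M\<^sup>2\<close> on the squared contraction factor.\<close>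
  define t where "t = c / M\<^sup>2"
  have "t > 0" using assms(3,4) by (simp add: t_def)
  have "(c / M)\<^sup>2 \<le> 1" using assms(3,4) by (simp add: power_le_one)
  have "(norm (u - t *\<^sub>R A u))\<^sup>2 = inner (u - t *\<^sub>R A u) (u - t *\<^sub>R A u)"
    by (simp add: power2_norm_eq_inner)
  also have "\<dots> = inner u u - 2 * t * inner u (A u) + t\<^sup>2 * inner (A u) (A u)"
    by (simp add: inner_diff_left inner_diff_right inner_commute power2_eq_square algebra_simps)
  also have "\<dots> \<le> (norm u)\<^sup>2 - 2 * t * (c * (norm u)\<^sup>2) + t\<^sup>2 * (norm u * M)\<^sup>2"
  proof -
    have "t * (c * (norm u)\<^sup>2) \<le> t * inner u (A u)"
      using coercive[of u] \<open>t > 0\<close> by (simp add: mult_left_mono)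
    moreover have "(norm (A u))\<^sup>2 \<le> (norm u * M)\<^sup>2"
      using bounded[of u] by (simp add: power_mono)
    then have "t\<^sup>2 * (norm (A u))\<^sup>2 \<le> t\<^sup>2 * (norm u * M)\<^sup>2"
      by (simp add: mult_left_mono)
    ultimately show ?thesis unfolding dot_square_norm by linarith
  qed
  also have "\<dots> = (1 - (c / M)\<^sup>2) * (norm u)\<^sup>2"
    using assms(3,4) by (simp add: t_def field_simps power2_eq_square)
  also have "\<dots> = (sqrt (1 - (c / M)\<^sup>2) * norm u)\<^sup>2"
    using \<open>(c / M)\<^sup>2 \<le> 1\<close> by (simp add: power_mult_distrib)
  finally have "(norm (u - t *\<^sub>R A u))\<^sup>2 \<le> (sqrt (1 - (c / M)\<^sup>2) * norm u)\<^sup>2" .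
  then show ?thesis
    unfolding t_def by (rule power2_le_imp_le) (use \<open>(c / M)\<^sup>2 \<le> 1\<close> in simp)
qed

lemma coercive_bounded_linear_bij:
  fixes A :: "'a::{real_inner, complete_space} \<Rightarrow> 'a"
  assumes "bounded_linear A" and "0 < c"
    and coercive: "\<And>u. c * (norm u)\<^sup>2 \<le> inner u (A u)"
  shows "bij A"
proof (rule bijI)
  interpret A: bounded_linear A by fact
  show "inj A"
  proof (rule injI)
    fix x y assume "A x = A y"
    then have "c * (norm (x - y))\<^sup>2 \<le> 0"
      using coercive[of "x - y"] by (simp add: A.diff)
    then show "x = y" using \<open>0 < c\<close> by (simp add: mult_le_0_iff)
  qed
  obtain M0 where M0: "\<And>u. norm (A u) \<le> norm u * M0" using A.bounded by blast
  define M where "M = max M0 c"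
  have bounded: "norm (A u) \<le> norm u * M" for u
  proof -
    have "norm u * M0 \<le> norm u * M" unfolding M_def by (simp add: mult_left_mono)
    with M0[of u] show ?thesis by linarith
  qed
  have "c \<le> M" by (simp add: M_def)
  define q where "q = sqrt (1 - (c / M)\<^sup>2)"
  have "(c / M)\<^sup>2 \<le> 1" using \<open>0 < c\<close> \<open>c \<le> M\<close> by (simp add: power_le_one)
  then have "0 \<le> q" "q < 1"
    using \<open>0 < c\<close> \<open>c \<le> M\<close> by (simp_all add: q_def)
  have "\<exists>z. A z = y" for y
  proof -
    define f where "f z = z - (c / M\<^sup>2) *\<^sub>R (A z - y)" for z
    have "dist (f z) (f w) \<le> q * dist z w" for z w
    proof -
      have "f z - f w = (z - w) - (c / M\<^sup>2) *\<^sub>R A (z - w)"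
        by (simp add: f_def A.diff scaleR_diff_right)
      then show ?thesis
        using coercive_step_contraction[OF coercive bounded \<open>0 < c\<close> \<open>c \<le> M\<close>, of "z - w"]
        by (simp add: dist_norm q_def)
    qed
    then obtain z where "f z = z"
      using banach_fix_type[OF \<open>0 \<le> q\<close> \<open>q < 1\<close>] by blast
    then have "A z = y" using \<open>0 < c\<close> \<open>c \<le> M\<close> by (simp add: f_def)
    then show ?thesis ..
  qed
  then show "surj A" by (metis surj_def)
qed

lemma left_invertible_bounded_below:
  fixes T :: "'a::real_normed_vector \<Rightarrow> 'a"
  assumes "left_invertible T"
  obtains K where "K > 0" and "\<And>x. norm x \<le> norm (T x) * K"
proof -
  obtain L where "bounded_linear L" and LT: "L \<circ> T = id"
    using assms unfolding left_invertible_def by blast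
  then obtain K where "K > 0" and K: "\<And>y. norm (L y) \<le> norm y * K"
    using bounded_linear.pos_bounded by blast
  have "norm x \<le> norm (T x) * K" for x
    using K[of "T x"] LT by (metis comp_apply id_apply)
  with \<open>K > 0\<close> show thesis by (rule that)
qed

lemma bij_gram_if_left_invertible:
  fixes T Ts :: "'a::{real_inner, complete_space} \<Rightarrow> 'a"
  assumes "bounded_linear T" and adj: "is_adjoint T Ts" and "left_invertible T"
  shows "bij (Ts \<circ> T)"
proof -
  obtain K where "K > 0" and K: "\<And>x. norm x \<le> norm (T x) * K"
    using left_invertible_bounded_below[OF assms(3)] by blast
  have "bounded_linear Ts" and inner_adj: "\<And>x y. inner (T x) y = inner x (Ts y)"
    using adj unfolding is_adjoint_def by auto
  with assms(1) have "bounded_linear (Ts \<circ> T)"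
    by (simp add: bounded_linear_compose comp_def)
  moreover have "(1 / K\<^sup>2) * (norm u)\<^sup>2 \<le> inner u ((Ts \<circ> T) u)" for u
  proof -
    have "(norm u)\<^sup>2 \<le> (norm (T u) * K)\<^sup>2" using K[of u] by (simp add: power_mono)
    then have "(1 / K\<^sup>2) * (norm u)\<^sup>2 \<le> (norm (T u))\<^sup>2"
      using \<open>K > 0\<close> by (simp add: divide_le_eq power_mult_distrib)
    also have "\<dots> = inner u ((Ts \<circ> T) u)"
      by (simp add: power2_norm_eq_inner inner_adj)
    finally show ?thesis .
  qed
  ultimately show ?thesis
    using \<open>K > 0\<close> by (intro coercive_bounded_linear_bij[of _ "1 / K\<^sup>2"]) auto
qed

lemma adjoint_ker_orthogonal_range:
  assumes "is_adjoint T Ts" and "k \<in> ker Ts"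
  shows "inner (T x) k = 0"
  using assms by (simp add: is_adjoint_def ker_def)

lemma adjoint_range_inter_ker:
  assumes "is_adjoint T Ts" and "y \<in> range T" and "y \<in> ker Ts"
  shows "y = 0"
proof -
  obtain v where "y = T v" using assms(2) by blast
  then have "inner y y = 0" using adjoint_ker_orthogonal_range[OF assms(1,3)] by simp
  then show ?thesis by simp
qed

lemma adjoint_gram_invariant_ker:
  assumes adj: "is_adjoint T Ts" and "(Ts \<circ> T) ` range T \<subseteq> range T"
  shows "(Ts \<circ> T) ` ker Ts \<subseteq> ker Ts"
proof (clarsimp simp: ker_def)
  fix k assume "Ts k = 0"
  have "inner w (Ts (Ts (T k))) = 0" for w
  proof -
    obtain v where v: "Ts (T (T w)) = T v" using assms(2) by (metis comp_apply image_subset_iff rangeE rangeI)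
    have "inner w (Ts (Ts (T k))) = inner (T v) k"
      using adj unfolding is_adjoint_def by (metis inner_commute v)
    then show ?thesis
      using adjoint_ker_orthogonal_range[OF adj] \<open>Ts k = 0\<close> by (simp add: ker_def)
  qed
  from this[of "Ts (Ts (T k))"] show "Ts (Ts (T k)) = 0" by simp
qed

locale gram_invertible =
  fixes T Ts :: "'a::real_inner \<Rightarrow> 'a"
  assumes linear_T: "linear T"
    and adjoint: "is_adjoint T Ts"
    and bij_gram: "bij (Ts \<circ> T)"
begin

abbreviation gram_inv :: "'a \<Rightarrow> 'a" where
  "gram_inv \<equiv> inv (Ts \<circ> T)"

lemma inner_adjoint: "inner (T x) y = inner x (Ts y)"
  using adjoint by (simp add: is_adjoint_def)

lemma linear_adjoint: "linear Ts"
  using adjoint by (simp add: is_adjoint_def bounded_linear.linear)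

lemma gram_gram_inv [simp]: "Ts (T (gram_inv y)) = y"
  using bij_gram by (metis bij_inv_eq_iff comp_apply)

lemma gram_inv_gram [simp]: "gram_inv (Ts (T x)) = x"
  using bij_gram by (metis bij_inv_eq_iff comp_apply)

lemma cauchy_dual_apply: "cauchy_dual T Ts x = T (gram_inv x)"
  by (simp add: cauchy_dual_def)

lemma gram_inv_diff_id: "gram_inv (Ts (T x) - x) = x - gram_inv x"
proof -
  have "Ts (T (x - gram_inv x)) = Ts (T x) - x"
    by (simp add: linear_diff[OF linear_T] linear_diff[OF linear_adjoint])
  then show ?thesis by (metis gram_inv_gram)
qed

definition dual_defect :: "'a \<Rightarrow> 'a" where
  "dual_defect x = cauchy_dual T Ts x - 2 *\<^sub>R T x + Ts (T (T x))"

lemma adjoint_dual_defect: "Ts (dual_defect x) = x - 2 *\<^sub>R Ts (T x) + Ts (Ts (T (T x)))"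
  by (simp add: dual_defect_def cauchy_dual_apply linear_add[OF linear_adjoint]
      linear_diff[OF linear_adjoint] linear_scale[OF linear_adjoint])

lemma two_isometry_iff_dual_defect_in_ker:
  "two_isometry T Ts \<longleftrightarrow> (\<forall>x. dual_defect x \<in> ker Ts)"
  by (simp add: two_isometry_def ker_def adjoint_dual_defect)

lemma dual_defect_zero_if_range_invariant:
  assumes "two_isometry T Ts" and "(Ts \<circ> T) ` range T \<subseteq> range T"
  shows "dual_defect x = 0"
proof (rule adjoint_range_inter_ker[OF adjoint])
  obtain v where v: "Ts (T (T x)) = T v" using assms(2) by (metis comp_apply image_subset_iff rangeE rangeI)
  have "dual_defect x = T (gram_inv x - 2 *\<^sub>R x + v)"
    by (simp add: dual_defect_def cauchy_dual_apply v linear_add[OF linear_T]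
        linear_diff[OF linear_T] linear_scale[OF linear_T])
  then show "dual_defect x \<in> range T" by simp
  show "dual_defect x \<in> ker Ts"
    using assms(1) two_isometry_iff_dual_defect_in_ker by blast
qed

lemma dual_defect_orthogonal_ker:
  assumes "(Ts \<circ> T) ` ker Ts \<subseteq> ker Ts" and k: "k \<in> ker Ts"
  shows "inner (dual_defect x) k = 0"
proof -
  have "inner (Ts (T (T x))) k = inner x (Ts (Ts (T k)))"
    by (metis inner_adjoint inner_commute)
  also have "\<dots> = 0" using assms by (auto simp: ker_def)
  finally show ?thesis
    using adjoint_ker_orthogonal_range[OF adjoint k]
    by (simp add: dual_defect_def cauchy_dual_apply inner_diff_left inner_add_left)
qed

lemma dual_defect_zero_if_ker_invariant:
  assumes "two_isometry T Ts" and "(Ts \<circ> T) ` ker Ts \<subseteq> ker Ts"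
  shows "dual_defect x = 0"
proof -
  have "dual_defect x \<in> ker Ts"
    using assms(1) two_isometry_iff_dual_defect_in_ker by blast
  then have "inner (dual_defect x) (dual_defect x) = 0"
    by (rule dual_defect_orthogonal_ker[OF assms(2)])
  then show ?thesis by simp
qed

lemma dual_defect_zero_iff_range_invariant:
  "(\<forall>x. dual_defect x = 0) \<longleftrightarrow> two_isometry T Ts \<and> (Ts \<circ> T) ` range T \<subseteq> range T"
proof
  assume zero: "\<forall>x. dual_defect x = 0"
  then have "Ts (T (T x)) = T (2 *\<^sub>R x - gram_inv x)" for x
    by (simp add: dual_defect_def cauchy_dual_apply linear_diff[OF linear_T]
        linear_scale[OF linear_T] algebra_simps)
  then have "(Ts \<circ> T) ` range T \<subseteq> range T" by auto
  moreover have "two_isometry T Ts"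
    using zero two_isometry_iff_dual_defect_in_ker linear_0[OF linear_adjoint]
    by (simp add: ker_def)
  ultimately show "two_isometry T Ts \<and> (Ts \<circ> T) ` range T \<subseteq> range T" by blast
qed (blast intro: dual_defect_zero_if_range_invariant)

lemma dual_defect_zero_iff_at_gram:
  "(\<forall>x. dual_defect x = 0) \<longleftrightarrow> (\<forall>x. dual_defect (Ts (T x)) = 0)"
  by (metis gram_gram_inv)

lemma dual_defect_gram:
  "dual_defect (Ts (T x)) = Ts (T (T (Ts (T x)))) - 2 *\<^sub>R T (Ts (T x)) + T x"
  by (simp add: dual_defect_def cauchy_dual_apply algebra_simps)

lemma dual_defect_zero_iff_intertwining:
  "dual_defect x = 0 \<longleftrightarrow> cauchy_dual T Ts (Ts (T x) - x) = Ts (T (T x)) - T x"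
proof -
  have "cauchy_dual T Ts (Ts (T x) - x) = T x - cauchy_dual T Ts x"
    by (simp add: cauchy_dual_apply gram_inv_diff_id linear_diff[OF linear_T])
  moreover have "dual_defect x = (Ts (T (T x)) - T x) - (T x - cauchy_dual T Ts x)"
    by (simp add: dual_defect_def algebra_simps scaleR_2)
  ultimately show ?thesis by (metis eq_iff_diff_eq_0)
qed

end

theorem mainTheorem3:
  fixes T Ts :: "'a::{real_inner, complete_space} \<Rightarrow> 'a"
  assumes "bounded_linear T"
    and "is_adjoint T Ts"
    and "left_invertible T"
  defines "T' \<equiv> cauchy_dual T Ts"
  shows "((two_isometry T Ts \<and> (Ts \<circ> T) ` ker Ts \<subseteq> ker Ts)
           \<longleftrightarrow> (two_isometry T Ts \<and> (Ts \<circ> T) ` range T \<subseteq> range T))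
       \<and> ((two_isometry T Ts \<and> (Ts \<circ> T) ` range T \<subseteq> range T)
           \<longleftrightarrow> (\<forall>x. T' x - 2 *\<^sub>R T x + Ts (T (T x)) = 0))
       \<and> ((\<forall>x. T' x - 2 *\<^sub>R T x + Ts (T (T x)) = 0)
           \<longleftrightarrow> (\<forall>x. Ts (T (T (Ts (T x)))) - 2 *\<^sub>R T (Ts (T x)) + T x = 0))
       \<and> ((\<forall>x. Ts (T (T (Ts (T x)))) - 2 *\<^sub>R T (Ts (T x)) + T x = 0)
           \<longleftrightarrow> (\<forall>x. T' (Ts (T x) - x) = Ts (T (T x)) - T x))"
proof -
  interpret gram_invertible T Ts
    using bounded_linear.linear[OF assms(1)] assms(2) bij_gram_if_left_invertible[OF assms(1-3)]
    by (rule gram_invertible.intro)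
  have iii: "(\<forall>x. T' x - 2 *\<^sub>R T x + Ts (T (T x)) = 0) \<longleftrightarrow> (\<forall>x. dual_defect x = 0)"
    by (simp add: T'_def dual_defect_def)
  have iii_iv: "(\<forall>x. dual_defect x = 0)
      \<longleftrightarrow> (\<forall>x. Ts (T (T (Ts (T x)))) - 2 *\<^sub>R T (Ts (T x)) + T x = 0)"
    unfolding dual_defect_zero_iff_at_gram dual_defect_gram ..
  have iii_v: "(\<forall>x. dual_defect x = 0) \<longleftrightarrow> (\<forall>x. T' (Ts (T x) - x) = Ts (T (T x)) - T x)"
    unfolding T'_def dual_defect_zero_iff_intertwining ..
  show ?thesis
    unfolding iii iii_iv [symmetric] iii_v [symmetric]
    using dual_defect_zero_if_ker_invariant dual_defect_zero_iff_range_invariant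
      adjoint_gram_invariant_ker[OF adjoint]
    by blast
qed

end
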